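(* For any hypothesis class $\mathcal{H}\subseteq\{0,1\}^{\mathcal{X}}$ and time horizon $T$, $$\inf_{\mathcal{A}}\operatorname{M}_{\mathcal{A}}(T,\mathcal{H}) \ge \frac{1}{8}\sup_{w\in\mathbb{N}}\sqrt{\min\{w,\operatorname{L}(\mathcal{H}),T\}\,\min\{\operatorname{AL}_w(\mathcal{H}),T\}},$$ where the infimum is over all (possibly randomized) online learners operating under apple tasting feedback.
   Context: Online binary classification: over rounds $t=1,\dots,T$, an adversary picks $(x_t,y_t)\in\mathcal{X}\times\{0,1\}$ and reveals $x_t$; the learner $\mathcal{A}$ (possibly randomized) outputs $\hat y_t=\mathcal{A}(x_t)\in\{0,1\}$ based on the history; under apple tasting feedback the learner observes $y_t$ only if $\hat y_t=1$. $\operatorname{M}_{\mathcal{A}}(T,\mathcal{H}) := \sup_{h\in\mathcal{H}}\sup_{x_1,\dots,x_T}\mathbb{E}\bigl[\sum_{t=1}^T \mathbb{1}\{\mathcal{A}(x_t)\neq h(x_t)\}\bigr]$ (labels $y_t=h(x_t)$, expectation over the learner's randomness). AL tree of width $w\in\mathbb{N}=\{1,2,\dots\}$ and depth $d$: a binary string $u$ is an internal node if $|u|<d$ and $u$ has fewer than $w$ ones; the tree assigns $x_u\in\mathcal{X}$ to each internal node. A path is a binary string $\sigma$ whose proper prefixes are all internal nodes but which is not itself one. The tree is shattered by $\mathcal{H}$ if for every path $\sigma$ some $h\in\mathcal{H}$ satisfies $h(x_{(\sigma_1,\dots,\sigma_{i-1})})=\sigma_i$ for all $i\le|\sigma|$.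 When $w\ge d$ it is a complete binary (Littlestone) tree. $\operatorname{L}(\mathcal{H})$ is the largest $d$ such that a complete binary tree of depth $d$ is shattered ($\infty$ if unbounded). $\operatorname{AL}_w(\mathcal{H})$ is the largest $d$ such that an AL tree of width $w$ and depth $d$ is shattered ($\infty$ if unbounded, $0$ if none). *)

theory Defs
  imports Complex_Main "HOL-Library.Extended_Nat"
begin

(* Labels {0,1} are rendered as bool (True = 1). Hypotheses: 'a \<Rightarrow> bool. *)

(* History of the interaction under apple tasting feedback:
   each past round records (x_s, own prediction yhat_s, feedback),
   where feedback = Some y_s if yhat_s = True and None otherwise. *)
type_synonym 'a history = "('a \<times> bool \<times> bool option) list"

(* A (possibly randomized) learner in behavioural form: given the history
   and the current instance, the probability of predicting 1. *)
type_synonym 'a learner = "'a history \<Rightarrow> 'a \<Rightarrow> real"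

definition valid_learner :: "'a learner \<Rightarrow> bool" where
  "valid_learner A \<longleftrightarrow> (\<forall>hist x. 0 \<le> A hist x \<and> A hist x \<le> 1)"

fun exp_mistakes :: "'a learner \<Rightarrow> ('a \<Rightarrow> bool) \<Rightarrow> 'a list \<Rightarrow> 'a history \<Rightarrow> real" where
  "exp_mistakes A h [] hist = 0"
| "exp_mistakes A h (x # xs) hist =
     A hist x * ((if h x then 0 else 1) + exp_mistakes A h xs (hist @ [(x, True, Some (h x))]))
   + (1 - A hist x) * ((if h x then 1 else 0) + exp_mistakes A h xs (hist @ [(x, False, None)]))"

(* The 0 is inserted only to fix the convention sup of the empty set = 0 (H = {});
   all mistake counts are nonnegative, so this changes nothing otherwise. *)
definition mistake_bound :: "'a learner \<Rightarrow> nat \<Rightarrow> ('a \<Rightarrow> bool) set \<Rightarrow> real" where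
  "mistake_bound A T H = Sup (insert 0 {exp_mistakes A h xs [] | h xs. h \<in> H \<and> length xs = T})"

(* Binary strings are bool lists (True = 1). *)
definition al_internal :: "nat \<Rightarrow> nat \<Rightarrow> bool list \<Rightarrow> bool" where
  "al_internal w d u \<longleftrightarrow> length u < d \<and> length (filter id u) < w"

definition complete_internal :: "nat \<Rightarrow> bool list \<Rightarrow> bool" where
  "complete_internal d u \<longleftrightarrow> length u < d"

definition is_path :: "(bool list \<Rightarrow> bool) \<Rightarrow> bool list \<Rightarrow> bool" where
  "is_path internal \<sigma> \<longleftrightarrow> (\<forall>i < length \<sigma>. internal (take i \<sigma>)) \<and> \<not> internal \<sigma>"

definition tree_shattered :: "('a \<Rightarrow> bool) set \<Rightarrow> (bool list \<Rightarrow> bool) \<Rightarrow> (bool list \<Rightarrow> 'a) \<Rightarrow> bool" where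
  "tree_shattered H internal xt \<longleftrightarrow>
     (\<forall>\<sigma>. is_path internal \<sigma> \<longrightarrow>
        (\<exists>h\<in>H. \<forall>i < length \<sigma>. h (xt (take i \<sigma>)) = \<sigma> ! i))"

(* Sup in enat: Sup {} = 0, Sup of an unbounded set = \<infinity>. *)
definition littlestone_dim :: "('a \<Rightarrow> bool) set \<Rightarrow> enat" where
  "littlestone_dim H = Sup {enat d | d. \<exists>xt. tree_shattered H (complete_internal d) xt}"

definition AL_dim :: "nat \<Rightarrow> ('a \<Rightarrow> bool) set \<Rightarrow> enat" where
  "AL_dim w H = Sup {enat d | d. \<exists>xt. tree_shattered H (al_internal w d) xt}"

end

theory Submission
  imports Defs "HOL-Library.Discrete_Functions"
begin

text \<open>The learner's strategy is known to the adversary, which may therefore fix its whole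
  sequence in advance.  Take a shattered AL tree of width a and depth d with 0 < a \<le> d \<le> T,
  and let r = floor (sqrt (d / a)).  The adversary walks down the tree in a phases.  In a phase it
  shows the nodes u, u0, u00, ... below the current node u, each in a block of r rounds
  labelled 0.  If the probabilities of predicting 1 somewhere in a block sum to at least r/2 over
  these r blocks, the learner has already made r/2 mistakes in expectation; otherwise on some block it predicts 0
  throughout with probability above 1/2, and since predicting 0 reveals no label, the adversary
  may label that block 1 instead, again forcing r/2 expected mistakes.  Each phase takes at
  most r^2 rounds and descends at most r edges, at most one of them a 1-edge, so the a phases
  stay inside the tree, fit into a r^2 \<le> d \<le> T rounds and force a r / 2 \<ge> sqrt (a d) / 4
  mistakes; as the tree is shattered, some hypothesis is consistent with all labels.  Taking
  a = min w L T and d = min AL_w T (or the complete tree of depth a when AL_w is smaller)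
  gives the bound.\<close>

fun exp_mistakes_labelled :: "'a learner \<Rightarrow> ('a \<times> bool) list \<Rightarrow> 'a history \<Rightarrow> real" where
  "exp_mistakes_labelled A [] hist = 0"
| "exp_mistakes_labelled A ((x, y) # zs) hist =
     A hist x * ((if y then 0 else 1) + exp_mistakes_labelled A zs (hist @ [(x, True, Some y)]))
   + (1 - A hist x) * ((if y then 1 else 0) + exp_mistakes_labelled A zs (hist @ [(x, False, None)]))"

lemma exp_mistakes_eq_labelled:
  "exp_mistakes A h xs hist = exp_mistakes_labelled A (map (\<lambda>x. (x, h x)) xs) hist"
  by (induction xs arbitrary: hist) auto

lemma valid_learnerD:
  assumes "valid_learner A"
  shows "0 \<le> A hist x" "A hist x \<le> 1"
  using assms unfolding valid_learner_def by auto

lemma exp_mistakes_labelled_nonneg: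
  assumes "valid_learner A"
  shows "0 \<le> exp_mistakes_labelled A zs hist"
proof (induction zs arbitrary: hist)
  case (Cons z zs)
  then show ?case
    using valid_learnerD[OF assms, of hist "fst z"] by (cases z) simp
qed simp

lemma exp_mistakes_labelled_le_length:
  assumes "valid_learner A"
  shows "exp_mistakes_labelled A zs hist \<le> length zs"
proof (induction zs arbitrary: hist)
  case (Cons z zs)
  obtain x y where z: "z = (x, y)" by fastforce
  let ?p = "A hist x"
  have "exp_mistakes_labelled A zs (hist @ [e]) \<le> length zs" for e
    by (rule Cons.IH)
  then have "?p * ((if y then 0 else 1) + exp_mistakes_labelled A zs (hist @ [(x, True, Some y)]))
      + (1 - ?p) * ((if y then 1 else 0) + exp_mistakes_labelled A zs (hist @ [(x, False, None)]))
      \<le> ?p * (1 + length zs) + (1 - ?p) * (1 + length zs)"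
    using valid_learnerD[OF assms, of hist x] by (intro add_mono mult_left_mono) (auto intro: add_increasing)
  then show ?case by (simp add: z algebra_simps)
qed simp

lemma exp_mistakes_labelled_append_ge:
  assumes "valid_learner A"
  shows "exp_mistakes_labelled A zs hist \<le> exp_mistakes_labelled A (zs @ zs') hist"
proof (induction zs arbitrary: hist)
  case Nil
  then show ?case using exp_mistakes_labelled_nonneg[OF assms] by simp
next
  case (Cons z zs)
  obtain x y where z: "z = (x, y)" by fastforce
  have "exp_mistakes_labelled A zs (hist @ [e]) \<le> exp_mistakes_labelled A (zs @ zs') (hist @ [e])" for e
    by (rule Cons.IH)
  then show ?case
    using valid_learnerD[OF assms, of hist x] unfolding z
    by (simp only: append_Cons exp_mistakes_labelled.simps, intro add_mono mult_left_mono) auto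
qed

text \<open>A mixture is a finite weighted family of histories: the distribution of the learner's
  history after a labelled sequence fixed in advance.\<close>

type_synonym 'a mixture = "(real \<times> 'a history) list"

definition mix_step :: "'a learner \<Rightarrow> 'a \<Rightarrow> bool \<Rightarrow> 'a mixture \<Rightarrow> 'a mixture" where
  "mix_step A x y \<mu> = concat (map (\<lambda>(w, hist).
     [(w * A hist x, hist @ [(x, True, Some y)]), (w * (1 - A hist x), hist @ [(x, False, None)])]) \<mu>)"

fun mix_run :: "'a learner \<Rightarrow> ('a \<times> bool) list \<Rightarrow> 'a mixture \<Rightarrow> 'a mixture" where
  "mix_run A [] \<mu> = \<mu>"
| "mix_run A ((x, y) # zs) \<mu> = mix_run A zs (mix_step A x y \<mu>)"

definition mix_mistakes :: "'a learner \<Rightarrow> ('a \<times> bool) list \<Rightarrow> 'a mixture \<Rightarrow> real" where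
  "mix_mistakes A zs \<mu> = sum_list (map (\<lambda>(w, hist). w * exp_mistakes_labelled A zs hist) \<mu>)"

definition mix_weight :: "'a mixture \<Rightarrow> real" where
  "mix_weight \<mu> = sum_list (map fst \<mu>)"

definition mix_nonneg :: "'a mixture \<Rightarrow> bool" where
  "mix_nonneg \<mu> \<longleftrightarrow> (\<forall>p\<in>set \<mu>. 0 \<le> fst p)"

lemma mix_mistakes_Nil [simp]: "mix_mistakes A [] \<mu> = 0"
  unfolding mix_mistakes_def by (induction \<mu>) auto

lemma mix_mistakes_Cons:
  "mix_mistakes A ((x, y) # zs) \<mu> =
     sum_list (map (\<lambda>(w, hist). w * (A hist x * (if y then 0 else 1) + (1 - A hist x) * (if y then 1 else 0))) \<mu>)
   + mix_mistakes A zs (mix_step A x y \<mu>)"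
  unfolding mix_mistakes_def mix_step_def by (induction \<mu>) (auto simp: algebra_simps)

lemma mix_mistakes_append:
  "mix_mistakes A (zs @ zs') \<mu> = mix_mistakes A zs \<mu> + mix_mistakes A zs' (mix_run A zs \<mu>)"
proof (induction zs arbitrary: \<mu>)
  case (Cons z zs)
  then show ?case by (cases z) (simp add: mix_mistakes_Cons)
qed simp

lemma mix_weight_run: "mix_weight (mix_run A zs \<mu>) = mix_weight \<mu>"
proof (induction zs arbitrary: \<mu>)
  case (Cons z zs)
  have "mix_weight (mix_step A x y \<mu>) = mix_weight \<mu>" for x y
    unfolding mix_weight_def mix_step_def by (induction \<mu>) (auto simp: algebra_simps)
  with Cons show ?case by (cases z) simp
qed simp

lemma mix_nonneg_run:
  assumes "valid_learner A" "mix_nonneg \<mu>"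
  shows "mix_nonneg (mix_run A zs \<mu>)"
  using assms(2)
proof (induction zs arbitrary: \<mu>)
  case (Cons z zs)
  have "mix_nonneg (mix_step A x y \<mu>)" for x y
    using Cons.prems valid_learnerD[OF assms(1)]
    unfolding mix_nonneg_def mix_step_def by auto
  with Cons.IH show ?case by (cases z) simp
qed simp

lemma mix_mistakes_nonneg:
  assumes "valid_learner A" "mix_nonneg \<mu>"
  shows "0 \<le> mix_mistakes A zs \<mu>"
  using assms(2) unfolding mix_mistakes_def mix_nonneg_def
  by (induction \<mu>) (auto intro!: add_nonneg_nonneg mult_nonneg_nonneg exp_mistakes_labelled_nonneg[OF assms(1)])

fun silent_prob :: "'a learner \<Rightarrow> 'a \<Rightarrow> nat \<Rightarrow> 'a history \<Rightarrow> real" where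
  "silent_prob A x 0 hist = 1"
| "silent_prob A x (Suc n) hist = (1 - A hist x) * silent_prob A x n (hist @ [(x, False, None)])"

definition mix_reveal_prob :: "'a learner \<Rightarrow> 'a \<Rightarrow> nat \<Rightarrow> 'a mixture \<Rightarrow> real" where
  "mix_reveal_prob A x n \<mu> = sum_list (map (\<lambda>(w, hist). w * (1 - silent_prob A x n hist)) \<mu>)"

lemma silent_prob_bounds:
  assumes "valid_learner A"
  shows "0 \<le> silent_prob A x n hist" "silent_prob A x n hist \<le> 1"
proof (induction n arbitrary: hist)
  case (Suc n)
  {
    case 1
    show ?case using Suc(1) valid_learnerD[OF assms, of hist x] by simp
  next
    case 2
    show ?case using Suc valid_learnerD[OF assms, of hist x] by (simp add: mult_le_one)
  }
qed simp_all

lemma exp_mistakes_labelled_replicate_False: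
  assumes "valid_learner A"
  shows "1 - silent_prob A x n hist \<le> exp_mistakes_labelled A (replicate n (x, False)) hist"
proof (induction n arbitrary: hist)
  case (Suc n)
  let ?p = "A hist x" and ?hist0 = "hist @ [(x, False, None)]" and ?zs = "replicate n (x, False)"
  have "1 - silent_prob A x (Suc n) hist = ?p * 1 + (1 - ?p) * (1 - silent_prob A x n ?hist0)"
    by (simp add: algebra_simps)
  also have "\<dots> \<le> ?p * (1 + exp_mistakes_labelled A ?zs (hist @ [(x, True, Some False)]))
      + (1 - ?p) * exp_mistakes_labelled A ?zs ?hist0"
    using Suc.IH[of ?hist0] valid_learnerD[OF assms, of hist x]
      exp_mistakes_labelled_nonneg[OF assms]
    by (intro add_mono mult_left_mono) auto
  finally show ?case by simp
qed simp

lemma exp_mistakes_labelled_replicate_True: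
  assumes "valid_learner A"
  shows "n * silent_prob A x n hist \<le> exp_mistakes_labelled A (replicate n (x, True)) hist"
proof (induction n arbitrary: hist)
  case (Suc n)
  let ?p = "A hist x" and ?hist0 = "hist @ [(x, False, None)]" and ?zs = "replicate n (x, True)"
  let ?s = "silent_prob A x n ?hist0"
  have "0 \<le> (1 - ?p) * (1 - ?s)"
    using silent_prob_bounds[OF assms, of x n ?hist0] valid_learnerD[OF assms, of hist x] by simp
  then have "Suc n * silent_prob A x (Suc n) hist \<le> (1 - ?p) * (1 + n * ?s)"
    by (simp add: algebra_simps)
  also have "\<dots> \<le> ?p * exp_mistakes_labelled A ?zs (hist @ [(x, True, Some True)])
      + (1 - ?p) * (1 + exp_mistakes_labelled A ?zs ?hist0)"
  proof (rule add_increasing)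
    show "0 \<le> ?p * exp_mistakes_labelled A ?zs (hist @ [(x, True, Some True)])"
      using valid_learnerD[OF assms, of hist x] exp_mistakes_labelled_nonneg[OF assms] by simp
    show "(1 - ?p) * (1 + n * ?s) \<le> (1 - ?p) * (1 + exp_mistakes_labelled A ?zs ?hist0)"
      using Suc.IH[of ?hist0] valid_learnerD[OF assms, of hist x] by (intro mult_left_mono) auto
  qed
  finally show ?case by simp
qed simp

lemma mix_mistakes_replicate_False:
  assumes "valid_learner A" "mix_nonneg \<mu>"
  shows "mix_reveal_prob A x n \<mu> \<le> mix_mistakes A (replicate n (x, False)) \<mu>"
  using assms(2) unfolding mix_reveal_prob_def mix_mistakes_def mix_nonneg_def
proof (induction \<mu>)
  case (Cons p \<mu>)
  then show ?case
    using exp_mistakes_labelled_replicate_False[OF assms(1)]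
    by (cases p) (auto intro!: add_mono mult_left_mono)
qed simp

lemma mix_mistakes_replicate_True:
  assumes "valid_learner A" "mix_nonneg \<mu>"
  shows "n * (mix_weight \<mu> - mix_reveal_prob A x n \<mu>) \<le> mix_mistakes A (replicate n (x, True)) \<mu>"
  using assms(2) unfolding mix_reveal_prob_def mix_mistakes_def mix_nonneg_def mix_weight_def
proof (induction \<mu>)
  case (Cons p \<mu>)
  obtain w hist where p: "p = (w, hist)" by fastforce
  have "w * (n * silent_prob A x n hist) \<le> w * exp_mistakes_labelled A (replicate n (x, True)) hist"
    using Cons.prems exp_mistakes_labelled_replicate_True[OF assms(1)] p by (intro mult_left_mono) auto
  with Cons show ?case by (simp add: p algebra_simps)
qed simp

definition segment_labels :: "nat \<Rightarrow> (bool list \<Rightarrow> 'a) \<Rightarrow> bool list \<Rightarrow> bool list \<Rightarrow> ('a \<times> bool) list" where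
  "segment_labels r xt u \<beta> = concat (map (\<lambda>i. replicate r (xt (u @ take i \<beta>), \<beta> ! i)) [0..<length \<beta>])"

lemma segment_labels_Nil [simp]: "segment_labels r xt u [] = []"
  by (simp add: segment_labels_def)

lemma segment_labels_snoc:
  "segment_labels r xt u (\<beta> @ [b]) = segment_labels r xt u \<beta> @ replicate r (xt (u @ \<beta>), b)"
  unfolding segment_labels_def
  by (simp add: nth_append, intro arg_cong[where f = concat] map_cong) auto

lemma length_segment_labels: "length (segment_labels r xt u \<beta>) = length \<beta> * r"
  by (induction \<beta> rule: rev_induct) (simp_all add: segment_labels_snoc)

lemma segment_labels_zeros_Suc:
  "segment_labels r xt u (replicate (Suc j) False)
     = segment_labels r xt u (replicate j False) @ replicate r (xt (u @ replicate j False), False)"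
  by (simp add: replicate_append_same[symmetric] segment_labels_snoc)

lemma sum_reveal_prob_le_mix_mistakes_zeros:
  assumes A: "valid_learner A" and \<mu>: "mix_nonneg \<mu>"
  shows "(\<Sum>i<j. mix_reveal_prob A (xt (u @ replicate i False)) r
            (mix_run A (segment_labels r xt u (replicate i False)) \<mu>))
    \<le> mix_mistakes A (segment_labels r xt u (replicate j False)) \<mu>"
proof (induction j)
  case (Suc j)
  let ?zeros = "segment_labels r xt u (replicate j False)"
  have "mix_reveal_prob A (xt (u @ replicate j False)) r (mix_run A ?zeros \<mu>)
      \<le> mix_mistakes A (replicate r (xt (u @ replicate j False), False)) (mix_run A ?zeros \<mu>)"
    by (rule mix_mistakes_replicate_False[OF A mix_nonneg_run[OF A \<mu>]])
  with Suc show ?case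
    by (simp add: segment_labels_zeros_Suc mix_mistakes_append del: replicate_Suc)
qed simp

lemma phase_mistakes:
  assumes A: "valid_learner A" and \<mu>: "mix_nonneg \<mu>"
  obtains \<beta> where "\<beta> = replicate r False \<or> (\<exists>j<r. \<beta> = replicate j False @ [True])"
    "r * mix_weight \<mu> / 2 \<le> mix_mistakes A (segment_labels r xt u \<beta>) \<mu>"
proof -
  define zeros where "zeros j = segment_labels r xt u (replicate j False)" for j
  define t where "t j = mix_reveal_prob A (xt (u @ replicate j False)) r (mix_run A (zeros j) \<mu>)" for j
  let ?W = "mix_weight \<mu>"
  show thesis
  proof (cases "r * ?W / 2 \<le> (\<Sum>i<r. t i)")
    case True
    then show thesis
      using that[of "replicate r False"]
        sum_reveal_prob_le_mix_mistakes_zeros[OF A \<mu>, where xt = xt and u = u and r = r and j = r]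
      unfolding t_def zeros_def by simp
  next
    case False
    obtain j where j: "j < r" "t j < ?W / 2"
    proof (rule ccontr)
      assume "\<not> thesis"
      with that have "\<forall>j<r. ?W / 2 \<le> t j" by (meson not_le)
      then have "card {..<r} * (?W / 2) \<le> (\<Sum>i<r. t i)"
        by (intro sum_bounded_below) auto
      with False show False by simp
    qed
    have "r * ?W / 2 = r * (?W / 2)" by simp
    also have "\<dots> \<le> r * (?W - t j)"
      using j by (intro mult_left_mono) auto
    also have "\<dots> \<le> mix_mistakes A (replicate r (xt (u @ replicate j False), True)) (mix_run A (zeros j) \<mu>)"
      using mix_mistakes_replicate_True[OF A mix_nonneg_run[OF A \<mu>]] mix_weight_run
      unfolding t_def by metis
    also have "\<dots> \<le> mix_mistakes A (segment_labels r xt u (replicate j False @ [True])) \<mu>"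
      using mix_mistakes_nonneg[OF A \<mu>, where zs = "zeros j"]
      by (simp add: segment_labels_snoc mix_mistakes_append zeros_def)
    finally show thesis
      using that j(1) by blast
  qed
qed

definition labels_follow :: "(bool list \<Rightarrow> 'a) \<Rightarrow> bool list \<Rightarrow> ('a \<times> bool) list \<Rightarrow> bool" where
  "labels_follow xt \<sigma> zs \<longleftrightarrow> (\<forall>(x, y)\<in>set zs. \<exists>i<length \<sigma>. x = xt (take i \<sigma>) \<and> y = \<sigma> ! i)"

lemma labels_follow_append [simp]:
  "labels_follow xt \<sigma> (zs @ zs') \<longleftrightarrow> labels_follow xt \<sigma> zs \<and> labels_follow xt \<sigma> zs'"
  unfolding labels_follow_def by (simp only: set_append ball_Un)

lemma labels_follow_segment_labels: "labels_follow xt (u @ \<beta> @ v) (segment_labels r xt u \<beta>)"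
proof -
  have "\<exists>k<length (u @ \<beta> @ v). xt (u @ take i \<beta>) = xt (take k (u @ \<beta> @ v)) \<and> \<beta> ! i = (u @ \<beta> @ v) ! k"
    if "i < length \<beta>" for i
    using that by (intro exI[of _ "length u + i"]) (simp add: nth_append)
  then show ?thesis
    unfolding labels_follow_def segment_labels_def by (auto simp: set_replicate_conv_if)
qed

lemma labels_follow_realised:
  assumes "labels_follow xt \<sigma> zs" "\<forall>i<length \<sigma>. h (xt (take i \<sigma>)) = \<sigma> ! i"
  shows "map (\<lambda>x. (x, h x)) (map fst zs) = zs"
  using assms unfolding labels_follow_def by (auto intro!: map_idI)

lemma al_internal_mono: "k \<le> w \<Longrightarrow> m \<le> d \<Longrightarrow> al_internal k m u \<Longrightarrow> al_internal w d u"
  unfolding al_internal_def by auto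

lemma complete_internal_eq_al_internal: "complete_internal d = al_internal d d"
  unfolding complete_internal_def al_internal_def
  using length_filter_le[of id] le_less_trans by blast

lemma is_path_append_zeros:
  assumes "\<forall>i<length u. al_internal a d (take i u)"
  shows "\<exists>v. is_path (al_internal a d) (u @ v)"
proof (cases "al_internal a d u")
  case False
  then show ?thesis
    using assms unfolding is_path_def by (intro exI[of _ "[]"]) simp
next
  case True
  define v where "v = replicate (d - length u) False"
  have "al_internal a d (take i (u @ v))" if "i < length (u @ v)" for i
  proof (cases "i < length u")
    case False
    then have "take i (u @ v) = u @ replicate (i - length u) False"
      using that unfolding v_def by (simp add: min_def)
    then show ?thesis
      using True that unfolding al_internal_def v_def by simp
  qed (use assms in simp)
  moreover have "\<not> al_internal a d (u @ v)"
    using True unfolding al_internal_def v_def by simp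
  ultimately show ?thesis
    unfolding is_path_def by blast
qed

lemma tree_shattered_al_internal_mono:
  assumes "k \<le> w" "m \<le> d" "tree_shattered H (al_internal w d) xt"
  shows "tree_shattered H (al_internal k m) xt"
  unfolding tree_shattered_def
proof (intro allI impI)
  fix \<sigma> assume "is_path (al_internal k m) \<sigma>"
  then have "\<forall>i<length \<sigma>. al_internal w d (take i \<sigma>)"
    using al_internal_mono[OF assms(1,2)] unfolding is_path_def by blast
  then obtain v where "is_path (al_internal w d) (\<sigma> @ v)"
    using is_path_append_zeros by blast
  then obtain h where h: "h \<in> H" "\<forall>i<length (\<sigma> @ v). h (xt (take i (\<sigma> @ v))) = (\<sigma> @ v) ! i"
    using assms(3) unfolding tree_shattered_def by blast
  moreover have "h (xt (take i \<sigma>)) = \<sigma> ! i" if "i < length \<sigma>" for i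
    using h(2)[rule_format, of i] that by (simp add: nth_append)
  ultimately show "\<exists>h\<in>H. \<forall>i<length \<sigma>. h (xt (take i \<sigma>)) = \<sigma> ! i"
    by blast
qed

lemma al_internal_prefixes_append_phase:
  assumes "\<forall>i<length u. al_internal a d (take i u)" "length (filter id u) < a" "length u + r \<le> d"
    and "\<beta> = replicate r False \<or> (\<exists>j<r. \<beta> = replicate j False @ [True])"
  shows "\<forall>i<length (u @ \<beta>). al_internal a d (take i (u @ \<beta>))"
proof (intro allI impI)
  fix i assume i: "i < length (u @ \<beta>)"
  show "al_internal a d (take i (u @ \<beta>))"
  proof (cases "i < length u")
    case False
    with i assms(4) have "take i (u @ \<beta>) = u @ replicate (i - length u) False" "i - length u < r"
      by (auto simp: min_def)
    then show ?thesis
      using assms(2,3) unfolding al_internal_def by simp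
  qed (use assms(1) in simp)
qed

lemma phases_force_mistakes:
  assumes A: "valid_learner A" and "mix_nonneg \<mu>" "\<forall>i<length u. al_internal a d (take i u)"
    and "length (filter id u) + k \<le> a" "length u + k * r \<le> d"
  shows "\<exists>v zs. is_path (al_internal a d) (u @ v) \<and> length zs \<le> k * r * r
    \<and> labels_follow xt (u @ v) zs \<and> real k * real r * mix_weight \<mu> / 2 \<le> mix_mistakes A zs \<mu>"
  using assms(2-5)
proof (induction k arbitrary: \<mu> u)
  case 0
  obtain v where "is_path (al_internal a d) (u @ v)"
    using is_path_append_zeros[OF "0.prems"(2)] by blast
  then show ?case
    by (intro exI[of _ v] exI[of _ "[]"]) (simp add: labels_follow_def)
next
  case (Suc k)
  obtain \<beta> where \<beta>: "\<beta> = replicate r False \<or> (\<exists>j<r. \<beta> = replicate j False @ [True])"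
    and phase: "r * mix_weight \<mu> / 2 \<le> mix_mistakes A (segment_labels r xt u \<beta>) \<mu>"
    using phase_mistakes[OF A Suc.prems(1)] by blast
  let ?\<mu>' = "mix_run A (segment_labels r xt u \<beta>) \<mu>"
  from \<beta> have len_\<beta>: "length \<beta> \<le> r" and ones_\<beta>: "length (filter id \<beta>) \<le> 1"
    by auto
  have pre: "\<forall>i<length (u @ \<beta>). al_internal a d (take i (u @ \<beta>))"
    using al_internal_prefixes_append_phase[OF Suc.prems(2) _ _ \<beta>] Suc.prems(3,4) by simp
  have ones: "length (filter id (u @ \<beta>)) + k \<le> a"
    using Suc.prems(3) ones_\<beta> unfolding id_def by simp
  have len: "length (u @ \<beta>) + k * r \<le> d"
    using Suc.prems(4) len_\<beta> by simp
  obtain v zs where v: "is_path (al_internal a d) ((u @ \<beta>) @ v)"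
    and zs: "length zs \<le> k * r * r" "labels_follow xt ((u @ \<beta>) @ v) zs"
      "real k * real r * mix_weight ?\<mu>' / 2 \<le> mix_mistakes A zs ?\<mu>'"
    using Suc.IH[OF mix_nonneg_run[OF A Suc.prems(1)] pre ones len] by blast
  have "length (segment_labels r xt u \<beta> @ zs) = length \<beta> * r + length zs"
    by (simp add: length_segment_labels)
  also have "\<dots> \<le> r * r + k * r * r"
    using len_\<beta> zs(1) by (intro add_mono mult_le_mono1)
  finally have "length (segment_labels r xt u \<beta> @ zs) \<le> Suc k * r * r"
    by (simp add: algebra_simps)
  moreover have "labels_follow xt (u @ \<beta> @ v) (segment_labels r xt u \<beta> @ zs)"
    using zs(2) labels_follow_segment_labels by simp
  moreover have "real (Suc k) * real r * mix_weight \<mu> / 2 \<le> mix_mistakes A (segment_labels r xt u \<beta> @ zs) \<mu>"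
    using phase zs(3) by (simp add: mix_mistakes_append mix_weight_run algebra_simps)
  ultimately show ?case
    using v by (intro exI[of _ "\<beta> @ v"] exI[of _ "segment_labels r xt u \<beta> @ zs"]) (simp add: algebra_simps)
qed

lemma floor_sqrt_div_scale:
  assumes "0 < a" "a \<le> d"
  defines "r \<equiv> floor_sqrt (d div a)"
  shows "a * r * r \<le> d" "sqrt (real a * real d) \<le> 2 * real a * real r"
proof -
  have "a * r * r \<le> a * (d div a)"
    using floor_sqrt_power2_le[of "d div a"] unfolding r_def power2_eq_square
    by (metis mult.assoc mult_le_mono2)
  also have "\<dots> \<le> d"
    by (rule times_div_less_eq_dividend)
  finally show "a * r * r \<le> d" .
  have "0 < r"
    using assms unfolding r_def by (simp add: div_greater_zero_iff)
  have "d < a + a * (d div a)"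
    using dividend_less_times_div[OF assms(1)] .
  also have "\<dots> \<le> a * (Suc r)\<^sup>2"
    using Suc_floor_sqrt_power2_gt[of "d div a"] unfolding r_def
    by (metis Suc_leI mult_Suc_right mult_le_mono2)
  also have "\<dots> \<le> a * (2 * r)\<^sup>2"
    using \<open>0 < r\<close> by (intro mult_le_mono2 power_mono) auto
  finally have "a * d \<le> a * (a * (2 * r)\<^sup>2)"
    by (intro mult_le_mono2) simp
  also have "\<dots> = (2 * a * r)\<^sup>2"
    by (simp add: power2_eq_square algebra_simps)
  finally have "real (a * d) \<le> real ((2 * a * r)\<^sup>2)"
    by (simp only: of_nat_le_iff)
  then show "sqrt (real a * real d) \<le> 2 * real a * real r"
    by (intro real_le_lsqrt) simp_all
qed

lemma shattered_al_tree_forces_mistakes: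
  assumes A: "valid_learner A" and shattered: "tree_shattered H (al_internal a d) xt"
    and "0 < a" "a \<le> d" "d \<le> T"
  obtains h xs where "h \<in> H" "length xs = T" "sqrt (real a * real d) / 8 \<le> exp_mistakes A h xs []"
proof -
  define r where "r = floor_sqrt (d div a)"
  have ard: "a * r * r \<le> d" and sqrt_ad: "sqrt (real a * real d) \<le> 2 * real a * real r"
    using floor_sqrt_div_scale[OF \<open>0 < a\<close> \<open>a \<le> d\<close>] unfolding r_def by blast+
  have "a * r \<le> a * r * r"
    unfolding mult.assoc by (rule mult_le_mono2[OF le_square])
  also note ard
  finally have len: "length ([] :: bool list) + a * r \<le> d"
    by simp
  define \<mu> :: "'a mixture" where "\<mu> = [(1, [])]"
  have nonneg: "mix_nonneg \<mu>"
    by (simp add: mix_nonneg_def \<mu>_def)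
  have pre: "\<forall>i<length ([] :: bool list). al_internal a d (take i [])"
    and ones: "length (filter id ([] :: bool list)) + a \<le> a"
    by simp_all
  from phases_force_mistakes[OF A nonneg pre ones len, of xt, unfolded append_Nil]
  obtain v zs where v: "is_path (al_internal a d) v"
    and zs: "length zs \<le> a * r * r" "labels_follow xt v zs"
      "real a * real r * mix_weight \<mu> / 2 \<le> mix_mistakes A zs \<mu>"
    by blast
  obtain h where h: "h \<in> H" "\<forall>i<length v. h (xt (take i v)) = v ! i"
    using shattered v unfolding tree_shattered_def by auto
  define xs where "xs = map fst zs @ replicate (T - length zs) (xt [])"
  have "length xs = T"
    using zs(1) ard \<open>d \<le> T\<close> unfolding xs_def by simp
  have "0 \<le> real a * real r"
    by simp
  with sqrt_ad have "sqrt (real a * real d) / 8 \<le> real a * real r / 2"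
    by linarith
  also have "\<dots> \<le> exp_mistakes_labelled A zs []"
    using zs(3) by (simp add: mix_mistakes_def mix_weight_def \<mu>_def)
  also have "\<dots> \<le> exp_mistakes_labelled A (zs @ map (\<lambda>x. (x, h x)) (replicate (T - length zs) (xt []))) []"
    by (rule exp_mistakes_labelled_append_ge[OF A])
  also have "\<dots> = exp_mistakes A h xs []"
    unfolding xs_def exp_mistakes_eq_labelled map_append labels_follow_realised[OF zs(2) h(2)] ..
  finally show thesis
    using that h(1) \<open>length xs = T\<close> by blast
qed

lemma bdd_above_mistakes:
  assumes "valid_learner A"
  shows "bdd_above (insert 0 {exp_mistakes A h xs [] | h xs. h \<in> H \<and> length xs = T})"
  using exp_mistakes_labelled_le_length[OF assms]
  by (intro bdd_aboveI[of _ "real T"]) (auto simp: exp_mistakes_eq_labelled, metis length_map)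

lemma exp_mistakes_le_mistake_bound:
  assumes "valid_learner A" "h \<in> H" "length xs = T"
  shows "exp_mistakes A h xs [] \<le> mistake_bound A T H"
  unfolding mistake_bound_def using assms bdd_above_mistakes[OF assms(1)] by (intro cSup_upper) auto

lemma mistake_bound_nonneg:
  assumes "valid_learner A"
  shows "0 \<le> mistake_bound A T H"
  unfolding mistake_bound_def using bdd_above_mistakes[OF assms] by (intro cSup_upper) auto

lemma enat_le_Sup_nat_obtain:
  assumes "enat n \<le> Sup {enat d | d. P d}" "0 < n"
  obtains d where "n \<le> d" "P d"
proof -
  have "enat (n - 1) < enat n"
    using assms(2) by simp
  also note assms(1)
  finally obtain d where "P d" "enat (n - 1) < enat d"
    unfolding less_Sup_iff by blast
  then show thesis
    by (intro that[of d]) auto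
qed

lemma shattered_al_tree_of_dims:
  fixes H :: "('a \<Rightarrow> bool) set"
  assumes "0 < k" "k \<le> w" "enat k \<le> littlestone_dim H" "enat m \<le> AL_dim w H"
  obtains a d xt where "tree_shattered H (al_internal a d) xt" "0 < a" "a \<le> d" "d \<le> max k m"
    "k * m \<le> a * d"
proof (cases "k \<le> m")
  case True
  then have "0 < m"
    using assms(1) by simp
  obtain d' xt where "m \<le> d'" "tree_shattered H (al_internal w d') xt"
    using enat_le_Sup_nat_obtain[OF assms(4)[unfolded AL_dim_def] \<open>0 < m\<close>] by blast
  then have "tree_shattered H (al_internal k m) xt"
    using tree_shattered_al_internal_mono assms(2) by blast
  then show thesis
    using that True assms(1) by auto
next
  case False
  obtain d' xt where "k \<le> d'" "tree_shattered H (al_internal d' d') xt"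
    using enat_le_Sup_nat_obtain[OF assms(3)[unfolded littlestone_dim_def] assms(1)]
    unfolding complete_internal_eq_al_internal by blast
  then have "tree_shattered H (al_internal k k) xt"
    using tree_shattered_al_internal_mono by blast
  then show thesis
    using that False assms(1) by auto
qed

lemma sqrt_dims_le_mistake_bound:
  fixes H :: "('a \<Rightarrow> bool) set"
  assumes A: "valid_learner A"
  shows "sqrt (real (the_enat (min (enat w) (min (littlestone_dim H) (enat T))))
      * real (the_enat (min (AL_dim w H) (enat T)))) \<le> 8 * mistake_bound A T H"
proof -
  have "min (enat w) (min (littlestone_dim H) (enat T)) \<le> enat T"
    by (simp add: min.coboundedI2)
  then obtain k where k: "min (enat w) (min (littlestone_dim H) (enat T)) = enat k"
    using enat_ile by blast
  have "min (AL_dim w H) (enat T) \<le> enat T"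
    by simp
  then obtain m where m: "min (AL_dim w H) (enat T) = enat m"
    using enat_ile by blast
  have "enat k \<le> enat w" "enat k \<le> littlestone_dim H" "enat k \<le> enat T"
    unfolding k[symmetric] by (simp_all add: min.coboundedI2)
  moreover have "enat m \<le> AL_dim w H" "enat m \<le> enat T"
    unfolding m[symmetric] by auto
  ultimately have kw: "k \<le> w" and kL: "enat k \<le> littlestone_dim H" and "k \<le> T"
    and mA: "enat m \<le> AL_dim w H" and "m \<le> T"
    by auto
  have "sqrt (real k * real m) \<le> 8 * mistake_bound A T H"
  proof (cases "k = 0")
    case True
    then show ?thesis
      using mistake_bound_nonneg[OF A] by simp
  next
    case False
    then have "0 < k"
      by simp
    then obtain a d xt where shattered: "tree_shattered H (al_internal a d) xt"
      and "0 < a" "a \<le> d" "d \<le> max k m" and km: "k * m \<le> a * d"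
      using shattered_al_tree_of_dims[OF _ kw kL mA] by blast
    then have "d \<le> T"
      using \<open>k \<le> T\<close> \<open>m \<le> T\<close> by simp
    obtain h xs where "h \<in> H" "length xs = T" "sqrt (real a * real d) / 8 \<le> exp_mistakes A h xs []"
      using shattered_al_tree_forces_mistakes[OF A shattered \<open>0 < a\<close> \<open>a \<le> d\<close> \<open>d \<le> T\<close>] .
    moreover have "exp_mistakes A h xs [] \<le> mistake_bound A T H"
      using exp_mistakes_le_mistake_bound[OF A \<open>h \<in> H\<close> \<open>length xs = T\<close>] .
    moreover have "sqrt (real k * real m) \<le> sqrt (real a * real d)"
      using km by (simp flip: of_nat_mult)
    ultimately show ?thesis
      by linarith
  qed
  then show ?thesis
    unfolding k m by simp
qed

theorem lemma5:
  fixes H :: "('a \<Rightarrow> bool) set" and T :: nat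
  shows "Inf {mistake_bound A T H | A. valid_learner A}
    \<ge> (1/8) * (SUP w\<in>{1::nat..}.
          sqrt (real (the_enat (min (enat w) (min (littlestone_dim H) (enat T))))
              * real (the_enat (min (AL_dim w H) (enat T)))))"
proof (rule cInf_greatest)
  have "valid_learner (\<lambda>_ _. 0)"
    unfolding valid_learner_def by simp
  then show "{mistake_bound A T H | A. valid_learner A} \<noteq> {}"
    by blast
next
  fix z assume "z \<in> {mistake_bound A T H | A. valid_learner A}"
  then obtain A where A: "valid_learner A" and z: "z = mistake_bound A T H"
    by blast
  have "(SUP w\<in>{1::nat..}. sqrt (real (the_enat (min (enat w) (min (littlestone_dim H) (enat T))))
      * real (the_enat (min (AL_dim w H) (enat T))))) \<le> 8 * z"
    unfolding z by (rule cSUP_least) (simp_all add: sqrt_dims_le_mistake_bound[OF A])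
  then show "(1/8) * (SUP w\<in>{1::nat..}. sqrt (real (the_enat (min (enat w) (min (littlestone_dim H) (enat T))))
      * real (the_enat (min (AL_dim w H) (enat T))))) \<le> z"
    by simp
qed

end
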